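(* Let $K$ be a field of characteristic $0$, let $E$ be the infinite-dimensional unitary Grassmann algebra over $K$ with even part $E_0$, let $A=\begin{pmatrix} E_0 & E\\ 0 & E\end{pmatrix}$, and for $k\geq1$ let $F_k(A)=K\langle x_1,\dots,x_k\rangle/(K\langle x_1,\dots,x_k\rangle\cap T(A))$. If $n\geq 2$ is even, then the polynomial \[[x_1,x_2][x_3,x_4]\cdots[x_{n+3},x_{n+4}]\] is a polynomial identity of both $F_n(A)$ and $F_{n+1}(A)$.
   Context: All algebras are associative and unitary over $K$; $K\langle X\rangle$ is the free unitary associative algebra on $X=\{x_1,x_2,\dots\}$, and $T(A)$ is the ideal of polynomial identities of $A$. $E$ is generated by anticommuting $e_1,e_2,\dots$ and $E_0$ is the span of basis products of even length. $[a,b]=ab-ba$. *)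

theory Defs
  imports Main
begin

section \<open>Grassmann algebra E over K (basis e_S, S a finite subset of nat)\<close>

type_synonym 'k grass = "nat set \<Rightarrow> 'k"

definition grass :: "'k::field grass set" where
  "grass = {x. finite {S. x S \<noteq> 0} \<and> (\<forall>S. x S \<noteq> 0 \<longrightarrow> finite S)}"

text \<open>E_0: span of basis products of even length\<close>
definition grass_even :: "'k::field grass set" where
  "grass_even = {x \<in> grass. \<forall>S. x S \<noteq> 0 \<longrightarrow> even (card S)}"

text \<open>sign of e_S e_T = sign * e_(S \<union> T) for disjoint S T\<close>
definition gsign :: "nat set \<Rightarrow> nat set \<Rightarrow> 'k::field" where
  "gsign S T = (-1) ^ card {(s,t). s \<in> S \<and> t \<in> T \<and> t < s}"

definition gmult :: "'k::field grass \<Rightarrow> 'k grass \<Rightarrow> 'k grass" where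
  "gmult x y = (\<lambda>U. \<Sum>(S,T) \<in> {(S,T). x S \<noteq> 0 \<and> y T \<noteq> 0 \<and> S \<inter> T = {} \<and> S \<union> T = U}.
                    gsign S T * x S * y T)"

definition gone :: "'k::field grass" where "gone = (\<lambda>S. if S = {} then 1 else 0)"
definition gzero :: "'k::field grass" where "gzero = (\<lambda>S. 0)"
definition gadd :: "'k::field grass \<Rightarrow> 'k grass \<Rightarrow> 'k grass" where
  "gadd x y = (\<lambda>S. x S + y S)"

section \<open>The algebra A = (E_0 E; 0 E), elements (a,b,c) ~ matrix [[a,b],[0,c]]\<close>

type_synonym 'k tri = "'k grass \<times> 'k grass \<times> 'k grass"

definition tri_carrier :: "'k::field tri set" where
  "tri_carrier = {(a,b,c). a \<in> grass_even \<and> b \<in> grass \<and> c \<in> grass}"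

definition tmult :: "'k::field tri \<Rightarrow> 'k tri \<Rightarrow> 'k tri" where
  "tmult X Y = (case X of (a,b,c) \<Rightarrow> case Y of (a',b',c') \<Rightarrow>
      (gmult a a', gadd (gmult a b') (gmult b c'), gmult c c'))"

definition tone :: "'k::field tri" where "tone = (gone, gzero, gone)"
definition tzero :: "'k::field tri" where "tzero = (gzero, gzero, gzero)"

definition tprod :: "'k::field tri list \<Rightarrow> 'k tri" where
  "tprod xs = foldr tmult xs tone"

section \<open>Free algebra K<X>, X = {x_1, x_2, ...}: finitely supported functions on words\<close>

type_synonym 'k ncpoly = "nat list \<Rightarrow> 'k"

definition polys :: "'k::field ncpoly set" where
  "polys = {p. finite {w. p w \<noteq> 0}}"

definition polys_in :: "nat \<Rightarrow> 'k::field ncpoly set" where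
  "polys_in k = {p \<in> polys. \<forall>w. p w \<noteq> 0 \<longrightarrow> set w \<subseteq> {1..k}}"

definition pmult :: "'k::field ncpoly \<Rightarrow> 'k ncpoly \<Rightarrow> 'k ncpoly" where
  "pmult p q = (\<lambda>w. \<Sum>i\<le>length w. p (take i w) * q (drop i w))"

definition pone :: "'k::field ncpoly" where "pone = (\<lambda>w. if w = [] then 1 else 0)"
definition pvar :: "nat \<Rightarrow> 'k::field ncpoly" where "pvar i = (\<lambda>w. if w = [i] then 1 else 0)"
definition psub :: "'k::field ncpoly \<Rightarrow> 'k ncpoly \<Rightarrow> 'k ncpoly" where
  "psub p q = (\<lambda>w. p w - q w)"

definition pprod :: "'k::field ncpoly list \<Rightarrow> 'k ncpoly" where
  "pprod ps = foldr pmult ps pone"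

definition pcomm :: "'k::field ncpoly \<Rightarrow> 'k ncpoly \<Rightarrow> 'k ncpoly" where
  "pcomm p q = psub (pmult p q) (pmult q p)"

definition psubst :: "'k::field ncpoly \<Rightarrow> (nat \<Rightarrow> 'k ncpoly) \<Rightarrow> 'k ncpoly" where
  "psubst f g = (\<lambda>w. \<Sum>u\<in>{u. f u \<noteq> 0}. f u * pprod (map g u) w)"

definition teval :: "'k::field ncpoly \<Rightarrow> (nat \<Rightarrow> 'k tri) \<Rightarrow> 'k tri" where
  "teval p \<phi> =
    ((\<lambda>S. \<Sum>w\<in>{w. p w \<noteq> 0}. p w * fst (tprod (map \<phi> w)) S),
     (\<lambda>S. \<Sum>w\<in>{w. p w \<noteq> 0}. p w * fst (snd (tprod (map \<phi> w))) S),
     (\<lambda>S. \<Sum>w\<in>{w. p w \<noteq> 0}. p w * snd (snd (tprod (map \<phi> w))) S))"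

definition T_A :: "'k::field ncpoly set" where
  "T_A = {p \<in> polys. \<forall>\<phi>. (\<forall>i. \<phi> i \<in> tri_carrier) \<longrightarrow> teval p \<phi> = tzero}"

text \<open>f is a polynomial identity of F_k(A) = K<x_1..x_k> / (K<x_1..x_k> \<inter> T(A)):
  for all elements g_i + I of F_k(A) substituted for x_i, f(g_1,...) lies in the ideal,
  i.e. f(g_1, g_2, ...) \<in> T(A).\<close>
definition is_PI_of_F :: "nat \<Rightarrow> 'k::field ncpoly \<Rightarrow> bool" where
  "is_PI_of_F k f \<longleftrightarrow> (\<forall>g. (\<forall>i. g i \<in> polys_in k) \<longrightarrow> psubst f g \<in> T_A)"

definition commprod :: "nat \<Rightarrow> 'k::field ncpoly" where
  "commprod n = pprod (map (\<lambda>j. pcomm (pvar (2*j+1)) (pvar (2*j+2))) [0..<(n+4) div 2])"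

end

theory Submission
  imports Defs
begin

text \<open>
  Elements of \<open>A\<close> are upper triangular \<open>2\<times>2\<close> matrices over \<open>E\<close>, and an element of \<open>F\<^sub>N(A)\<close>
  is represented by a polynomial in \<open>x\<^sub>1, \<dots>, x\<^sub>N\<close>. Substituting such polynomials into
  \<open>[x\<^sub>1, x\<^sub>2] \<cdots> [x\<^bsub>n+3\<^esub>, x\<^bsub>n+4\<^esub>]\<close> and evaluating in \<open>A\<close> gives a product \<open>C\<^sub>0 C\<^sub>1 \<cdots> C\<^sub>m\<close>,
  \<open>m = (n+2)/2\<close>, of commutators of matrices. The upper left entry of each \<open>C\<^sub>j\<close> is a commutator
  in the commutative algebra \<open>E\<^sub>0\<close>, hence zero. The lower right entry of \<open>C\<^sub>1 \<cdots> C\<^sub>m\<close> is a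
  product of \<open>m\<close> commutators of elements of the subalgebra of \<open>E\<close> generated by \<open>N \<le> n + 1\<close>
  elements \<open>z\<^sub>j\<close>. Splitting \<open>z\<^sub>j\<close> into its even part and its odd part \<open>y\<^sub>j\<close>, each commutator lies in the \<open>E\<^sub>0\<close>-span of the
  monomials of degree at least 2 in the \<open>y\<^sub>j\<close>, so the product lies in the span of the monomials of
  degree at least \<open>n + 2 > N\<close>; these vanish because the \<open>y\<^sub>j\<close> anticommute and square to zero.
  Hence \<open>C\<^sub>0\<close> has zero upper left entry, \<open>C\<^sub>1 \<cdots> C\<^sub>m\<close> has zero diagonal, and their product is zero.
\<close>

section \<open>Signs of the Grassmann product\<close>

definition inversions :: "nat set \<Rightarrow> nat set \<Rightarrow> nat" where
  "inversions S T = card {(s,t). s \<in> S \<and> t \<in> T \<and> t < s}"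

lemma gsign_eq_inversions: "gsign S T = (-1) ^ inversions S T"
  by (simp add: gsign_def inversions_def)

lemma finite_inversion_pairs:
  "finite S \<Longrightarrow> finite T \<Longrightarrow> finite {(s,t). s \<in> S \<and> t \<in> T \<and> t < s}"
  by (rule finite_subset[of _ "S \<times> T"]) auto

lemma inversions_Un_left:
  assumes "finite A" "finite B" "finite C" "A \<inter> B = {}"
  shows "inversions (A \<union> B) C = inversions A C + inversions B C"
proof -
  have "{(s,t). s \<in> A \<union> B \<and> t \<in> C \<and> t < s} =
        {(s,t). s \<in> A \<and> t \<in> C \<and> t < s} \<union> {(s,t). s \<in> B \<and> t \<in> C \<and> t < s}" by auto
  moreover have "{(s,t). s \<in> A \<and> t \<in> C \<and> t < s} \<inter> {(s,t). s \<in> B \<and> t \<in> C \<and> t < s} = {}"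
    using assms(4) by auto
  ultimately show ?thesis unfolding inversions_def
    by (simp add: card_Un_disjoint finite_inversion_pairs assms)
qed

lemma inversions_Un_right:
  assumes "finite A" "finite B" "finite C" "B \<inter> C = {}"
  shows "inversions A (B \<union> C) = inversions A B + inversions A C"
proof -
  have "{(s,t). s \<in> A \<and> t \<in> B \<union> C \<and> t < s} =
        {(s,t). s \<in> A \<and> t \<in> B \<and> t < s} \<union> {(s,t). s \<in> A \<and> t \<in> C \<and> t < s}" by auto
  moreover have "{(s,t). s \<in> A \<and> t \<in> B \<and> t < s} \<inter> {(s,t). s \<in> A \<and> t \<in> C \<and> t < s} = {}"
    using assms(4) by auto
  ultimately show ?thesis unfolding inversions_def
    by (simp add: card_Un_disjoint finite_inversion_pairs assms)
qed

lemma inversions_add_inversions_swap: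
  assumes "finite A" "finite B" "A \<inter> B = {}"
  shows "inversions A B + inversions B A = card A * card B"
proof -
  let ?lt = "{(s,t). s \<in> A \<and> t \<in> B \<and> s < t}"
  have "{(t,s). t \<in> B \<and> s \<in> A \<and> s < t} = prod.swap ` ?lt"
    by (auto simp: image_iff)
  then have "inversions B A = card ?lt"
    unfolding inversions_def by (simp add: card_image)
  moreover have "A \<times> B = {(s,t). s \<in> A \<and> t \<in> B \<and> t < s} \<union> ?lt"
    using assms(3) by (auto simp: linorder_neq_iff)
  moreover have "finite ?lt"
    by (rule finite_subset[of _ "A \<times> B"]) (auto simp: assms)
  ultimately have "card (A \<times> B) = inversions A B + inversions B A"
    unfolding inversions_def
    by (simp add: card_Un_disjoint finite_inversion_pairs assms disjoint_iff)
  then show ?thesis by (simp add: card_cartesian_product)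
qed

lemma gsign_Un_left:
  "finite A \<Longrightarrow> finite B \<Longrightarrow> finite C \<Longrightarrow> A \<inter> B = {} \<Longrightarrow>
   (gsign (A \<union> B) C :: 'k::field) = gsign A C * gsign B C"
  by (simp add: gsign_eq_inversions inversions_Un_left power_add)

lemma gsign_Un_right:
  "finite A \<Longrightarrow> finite B \<Longrightarrow> finite C \<Longrightarrow> B \<inter> C = {} \<Longrightarrow>
   (gsign A (B \<union> C) :: 'k::field) = gsign A B * gsign A C"
  by (simp add: gsign_eq_inversions inversions_Un_right power_add)

lemma gsign_mult_self: "(gsign A B :: 'k::field) * gsign A B = 1"
  by (simp add: gsign_eq_inversions power_add[symmetric] flip: mult_2)

lemma gsign_swap:
  assumes "finite A" "finite B" "A \<inter> B = {}"
  shows "(gsign A B :: 'k::field) = (-1) ^ (card A * card B) * gsign B A"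
proof -
  have "(gsign A B :: 'k) * gsign B A = (-1) ^ (card A * card B)"
    using inversions_add_inversions_swap[OF assms]
    by (simp add: gsign_eq_inversions power_add[symmetric])
  then show ?thesis
    using gsign_mult_self[of B A] by (metis mult.assoc mult.right_neutral)
qed

lemma gsign_empty_left [simp]: "gsign {} A = 1"
  and gsign_empty_right [simp]: "gsign A {} = 1"
  by (simp_all add: gsign_def)

lemma gsign_nested:
  assumes "R \<subseteq> S" "S \<subseteq> U" "finite U"
  shows "(gsign R (U-R) :: 'k::field) * gsign (S-R) (U-S) = gsign S (U-S) * gsign R (S-R)"
proof -
  have f: "finite R" "finite S" "finite (S-R)" "finite (U-S)"
    using assms by (auto intro: finite_subset)
  have "U - R = (S-R) \<union> (U-S)" using assms by auto
  then have 1: "(gsign R (U-R) :: 'k) = gsign R (S-R) * gsign R (U-S)"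
    using gsign_Un_right[of R "S-R" "U-S"] f by auto
  have "S = R \<union> (S-R)" using assms by auto
  then have 2: "(gsign S (U-S) :: 'k) = gsign R (U-S) * gsign (S-R) (U-S)"
    using gsign_Un_left[of R "S-R" "U-S"] f by (metis Diff_disjoint)
  show ?thesis unfolding 1 2 by (simp add: algebra_simps)
qed

section \<open>The Grassmann algebra as a ring\<close>

lemma grass_finite_support: "x \<in> grass \<Longrightarrow> finite {S. x S \<noteq> 0}"
  and grass_finite_set: "x \<in> grass \<Longrightarrow> x S \<noteq> 0 \<Longrightarrow> finite S"
  by (simp_all add: grass_def)

lemma grass_infinite_eq_0: "x \<in> grass \<Longrightarrow> infinite S \<Longrightarrow> x S = 0"
  using grass_finite_set by blast

text \<open>Summing over all subsets of \<open>U\<close> rather than over the support turns the proofs of the ring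
  laws into reindexings of sums over power sets.\<close>

definition gconv :: "'k::field grass \<Rightarrow> 'k grass \<Rightarrow> 'k grass" where
  "gconv x y U = (if finite U then \<Sum>S\<in>Pow U. gsign S (U-S) * x S * y (U-S) else 0)"

lemma gmult_eq_gconv:
  assumes x: "x \<in> grass" and y: "y \<in> grass"
  shows "gmult x y = gconv x y"
proof
  fix U
  show "gmult x y U = gconv x y U"
  proof (cases "finite U")
    case True
    let ?P = "{(S,T). x S \<noteq> 0 \<and> y T \<noteq> 0 \<and> S \<inter> T = {} \<and> S \<union> T = U}"
    let ?Q = "{S \<in> Pow U. x S \<noteq> 0 \<and> y (U-S) \<noteq> 0}"
    have "gmult x y U = (\<Sum>(S,T)\<in>?P. gsign S T * x S * y T)" by (simp add: gmult_def)
    also have "\<dots> = (\<Sum>S\<in>?Q. gsign S (U-S) * x S * y (U-S))"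
      by (rule sum.reindex_bij_witness[where i="\<lambda>S. (S, U-S)" and j = "fst"])
        (auto simp: Un_Diff Diff_triv Int_commute)
    also have "\<dots> = (\<Sum>S\<in>Pow U. gsign S (U-S) * x S * y (U-S))"
      by (rule sum.mono_neutral_left) (auto simp: True)
    finally show ?thesis by (simp add: gconv_def True)
  next
    case False
    then have "{(S,T). x S \<noteq> 0 \<and> y T \<noteq> 0 \<and> S \<inter> T = {} \<and> S \<union> T = U} = {}"
      using grass_finite_set[OF x] grass_finite_set[OF y] by auto
    with False show ?thesis unfolding gmult_def gconv_def by (simp only:) simp
  qed
qed

lemma gconv_nonzeroD:
  assumes "gconv x y U \<noteq> 0"
  shows "finite U \<and> (\<exists>S\<subseteq>U. x S \<noteq> 0 \<and> y (U-S) \<noteq> 0)"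
proof -
  have f: "finite U" using assms by (auto simp: gconv_def split: if_splits)
  then have "(\<Sum>S\<in>Pow U. gsign S (U-S) * x S * y (U-S)) \<noteq> 0"
    using assms by (simp add: gconv_def)
  then obtain S where "S \<in> Pow U" "gsign S (U-S) * x S * y (U-S) \<noteq> 0"
    using sum.not_neutral_contains_not_neutral by blast
  then show ?thesis using f by auto
qed

lemma gconv_in_grass:
  assumes x: "x \<in> grass" and y: "y \<in> grass"
  shows "gconv x y \<in> grass"
proof -
  have "{U. gconv x y U \<noteq> 0} \<subseteq> (\<lambda>(S,T). S \<union> T) ` ({S. x S \<noteq> 0} \<times> {T. y T \<noteq> 0})"
  proof
    fix U assume "U \<in> {U. gconv x y U \<noteq> 0}"
    then obtain S where "S \<subseteq> U" "x S \<noteq> 0" "y (U-S) \<noteq> 0" using gconv_nonzeroD by blast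
    then show "U \<in> (\<lambda>(S,T). S \<union> T) ` ({S. x S \<noteq> 0} \<times> {T. y T \<noteq> 0})"
      by (auto simp: image_iff intro!: bexI[of _ "(S, U-S)"])
  qed
  then have "finite {U. gconv x y U \<noteq> 0}"
    by (rule finite_subset) (simp add: grass_finite_support x y)
  then show ?thesis using gconv_nonzeroD by (auto simp: grass_def)
qed

lemma gconv_assoc: "gconv (gconv x y) z = gconv x (gconv y z)"
proof
  fix U
  show "gconv (gconv x y) z U = gconv x (gconv y z) U"
  proof (cases "finite U")
    case False then show ?thesis by (simp add: gconv_def)
  next
    case True
    have fin: "S \<in> Pow U \<Longrightarrow> finite S" for S using True finite_subset by auto
    let ?t = "\<lambda>R T. gsign R (U-R) * gsign T (U-R-T) * x R * y T * z (U-R-T)"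
    have "gconv (gconv x y) z U =
      (\<Sum>S\<in>Pow U. \<Sum>R\<in>Pow S. gsign S (U-S) * gsign R (S-R) * x R * y (S-R) * z (U-S))"
      using fin by (simp add: gconv_def True sum_distrib_left sum_distrib_right algebra_simps)
    also have "\<dots> = (\<Sum>(S,R)\<in>Sigma (Pow U) Pow.
                      gsign S (U-S) * gsign R (S-R) * x R * y (S-R) * z (U-S))"
      by (rule sum.Sigma) (auto simp: True fin)
    also have "\<dots> = (\<Sum>(R,T)\<in>Sigma (Pow U) (\<lambda>R. Pow (U-R)). ?t R T)"
    proof (rule sum.reindex_bij_witness[where i="\<lambda>(R,T). (R \<union> T, R)" and j = "\<lambda>(S,R). (R, S-R)"])
      fix a assume "a \<in> Sigma (Pow U) Pow"
      then obtain S R where a: "a = (S,R)" "R \<subseteq> S" "S \<subseteq> U" by auto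
      have "U - R - (S - R) = U - S" using a by auto
      moreover have "?t R (S-R) = gsign S (U-S) * gsign R (S-R) * x R * y (S-R) * z (U-S)"
        by (simp only: calculation gsign_nested[OF a(2) a(3) True])
      ultimately show "(case (case a of (S, R) \<Rightarrow> (R, S - R)) of (R, T) \<Rightarrow> ?t R T) =
          (case a of (S, R) \<Rightarrow> gsign S (U-S) * gsign R (S-R) * x R * y (S-R) * z (U-S))"
        using a by simp
    qed auto
    also have "\<dots> = (\<Sum>R\<in>Pow U. \<Sum>T\<in>Pow (U-R). ?t R T)"
      by (rule sum.Sigma[symmetric]) (auto simp: True)
    also have "\<dots> = gconv x (gconv y z) U"
      by (simp add: gconv_def True sum_distrib_left algebra_simps)
    finally show ?thesis .
  qed
qed

definition gscalar :: "'k::field \<Rightarrow> 'k grass" where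
  "gscalar r = (\<lambda>S. if S = {} then r else 0)"

lemma gscalar_in_grass: "gscalar r \<in> grass"
  by (simp add: grass_def gscalar_def)

lemma gconv_gscalar_left: "x \<in> grass \<Longrightarrow> gconv (gscalar r) x = (\<lambda>U. r * x U)"
proof
  fix U assume x: "x \<in> grass"
  have "finite U \<Longrightarrow> (\<Sum>S\<in>Pow U. gsign S (U-S) * gscalar r S * x (U-S)) =
      (\<Sum>S\<in>Pow U. if S = {} then r * x U else 0)"
    by (rule sum.cong) (auto simp: gscalar_def)
  then show "gconv (gscalar r) x U = r * x U"
    using x by (simp add: gconv_def grass_infinite_eq_0)
qed

lemma gconv_gscalar_right: "x \<in> grass \<Longrightarrow> gconv x (gscalar r) = (\<lambda>U. r * x U)"
proof
  fix U assume x: "x \<in> grass"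
  have "finite U \<Longrightarrow> (\<Sum>S\<in>Pow U. gsign S (U-S) * x S * gscalar r (U-S)) =
      (\<Sum>S\<in>Pow U. if S = U then r * x U else 0)"
    by (rule sum.cong) (auto simp: gscalar_def)
  then show "gconv x (gscalar r) U = r * x U"
    using x by (simp add: gconv_def grass_infinite_eq_0)
qed

lemma gconv_add_left: "gconv (\<lambda>S. x S + y S) z = (\<lambda>U. gconv x z U + gconv y z U)"
  and gconv_add_right: "gconv x (\<lambda>S. y S + z S) = (\<lambda>U. gconv x y U + gconv x z U)"
  by (simp_all add: fun_eq_iff gconv_def sum.distrib algebra_simps)

lemma gconv_swap:
  assumes "finite U"
  shows "gconv y x U = (\<Sum>S\<in>Pow U. (-1) ^ (card S * card (U-S)) * gsign S (U-S) * x S * y (U-S))"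
proof -
  have "gconv y x U = (\<Sum>S\<in>Pow U. gsign S (U-S) * y S * x (U-S))"
    by (simp add: gconv_def assms)
  also have "\<dots> = (\<Sum>S\<in>Pow U. gsign (U-S) (U-(U-S)) * y (U-S) * x (U-(U-S)))"
    by (rule sum.reindex_bij_witness[where i="\<lambda>S. U - S" and j="\<lambda>S. U - S"])
      (auto simp: Diff_Diff_Int Int_absorb1)
  also have "\<dots> = (\<Sum>S\<in>Pow U. (-1) ^ (card S * card (U-S)) * gsign S (U-S) * x S * y (U-S))"
  proof (rule sum.cong)
    fix S assume "S \<in> Pow U"
    then have s: "U - (U - S) = S" "finite S" "finite (U-S)"
      using assms by (auto intro: finite_subset)
    have "gsign (U-S) S = ((-1) ^ (card (U-S) * card S) * gsign S (U-S) :: 'a)"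
      by (rule gsign_swap) (use s in auto)
    then show "gsign (U-S) (U-(U-S)) * y (U-S) * x (U-(U-S)) =
        (-1) ^ (card S * card (U-S)) * gsign S (U-S) * x S * y (U-S)"
      using s by (simp add: mult_ac)
  qed simp
  finally show ?thesis .
qed

definition even_supported :: "'k::field grass \<Rightarrow> bool" where
  "even_supported x \<longleftrightarrow> (\<forall>S. x S \<noteq> 0 \<longrightarrow> even (card S))"

definition odd_supported :: "'k::field grass \<Rightarrow> bool" where
  "odd_supported x \<longleftrightarrow> (\<forall>S. x S \<noteq> 0 \<longrightarrow> odd (card S))"

lemma gconv_commute_even_supported:
  assumes "even_supported x" shows "gconv y x = gconv x y"
proof
  fix U show "gconv y x U = gconv x y U"
  proof (cases "finite U")
    case True
    show ?thesis unfolding gconv_swap[OF True, where x=x and y=y]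
      by (simp add: gconv_def True) (rule sum.cong, use assms in \<open>auto simp: even_supported_def\<close>)
  qed (simp add: gconv_def)
qed

lemma gconv_anticommute_odd_supported:
  assumes "odd_supported x" "odd_supported y" shows "gconv y x = (\<lambda>U. - gconv x y U)"
proof
  fix U show "gconv y x U = - gconv x y U"
  proof (cases "finite U")
    case True
    have "(-1) ^ (card S * card (U-S)) * gsign S (U-S) * x S * y (U-S) =
        - (gsign S (U-S) * x S * y (U-S))" for S
      using assms by (cases "x S = 0 \<or> y (U-S) = 0") (auto simp: odd_supported_def)
    then show ?thesis
      unfolding gconv_swap[OF True, where x=x and y=y]
      by (simp add: gconv_def True sum_negf[symmetric])
  qed (simp add: gconv_def)
qed

lemma even_supported_gconv:
  assumes "even_supported x" "even_supported y" shows "even_supported (gconv x y)"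
  unfolding even_supported_def
proof (intro allI impI)
  fix U assume "gconv x y U \<noteq> 0"
  then obtain S where s: "finite U" "S \<subseteq> U" "x S \<noteq> 0" "y (U-S) \<noteq> 0"
    using gconv_nonzeroD by blast
  then have "card U = card S + card (U-S)"
    by (metis card_Diff_subset card_mono finite_subset le_add_diff_inverse)
  then show "even (card U)" using assms s by (simp add: even_supported_def)
qed

typedef (overloaded) ('k::field) grassmann = "grass :: 'k grass set"
  by (rule exI[of _ "\<lambda>S. 0"]) (simp add: grass_def)

setup_lifting type_definition_grassmann

lemma grass_add: "x \<in> grass \<Longrightarrow> y \<in> grass \<Longrightarrow> (\<lambda>S. x S + y S) \<in> grass"
proof -
  assume x: "x \<in> grass" and y: "y \<in> grass"
  have "{S. x S + y S \<noteq> 0} \<subseteq> {S. x S \<noteq> 0} \<union> {S. y S \<noteq> 0}" by auto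
  then have "finite {S. x S + y S \<noteq> 0}"
    by (rule finite_subset) (simp add: grass_finite_support x y)
  moreover have "x S + y S \<noteq> 0 \<Longrightarrow> finite S" for S
    using grass_finite_set[OF x] grass_finite_set[OF y] by force
  ultimately show ?thesis by (simp add: grass_def)
qed

lemma grass_uminus: "x \<in> grass \<Longrightarrow> (\<lambda>S. - x S) \<in> grass"
  by (simp add: grass_def)

instantiation grassmann :: (field) ring_1
begin
lift_definition zero_grassmann :: "'a grassmann" is "\<lambda>S. 0" by (simp add: grass_def)
lift_definition one_grassmann :: "'a grassmann" is "gscalar 1" by (rule gscalar_in_grass)
lift_definition plus_grassmann :: "'a grassmann \<Rightarrow> 'a grassmann \<Rightarrow> 'a grassmann"
  is "\<lambda>x y S. x S + y S" by (rule grass_add)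
lift_definition uminus_grassmann :: "'a grassmann \<Rightarrow> 'a grassmann"
  is "\<lambda>x S. - x S" by (rule grass_uminus)
lift_definition minus_grassmann :: "'a grassmann \<Rightarrow> 'a grassmann \<Rightarrow> 'a grassmann"
  is "\<lambda>x y S. x S - y S" by (drule grass_add, erule grass_uminus) simp
lift_definition times_grassmann :: "'a grassmann \<Rightarrow> 'a grassmann \<Rightarrow> 'a grassmann"
  is gconv by (rule gconv_in_grass)

instance
proof
  fix a b c :: "'a grassmann"
  show "a + b + c = a + (b + c)" by transfer (simp add: add.assoc)
  show "a + b = b + a" by transfer (simp add: add.commute)
  show "0 + a = a" by transfer simp
  show "- a + a = 0" by transfer simp
  show "a - b = a + - b" by transfer simp
  show "a * b * c = a * (b * c)" by transfer (rule gconv_assoc)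
  show "1 * a = a" by transfer (simp add: gconv_gscalar_left)
  show "a * 1 = a" by transfer (simp add: gconv_gscalar_right)
  show "(a + b) * c = a * c + b * c" by transfer (rule gconv_add_left)
  show "a * (b + c) = a * b + a * c" by transfer (rule gconv_add_right)
  show "(0::'a grassmann) \<noteq> 1" by transfer (simp add: fun_eq_iff gscalar_def)
qed
end

lemma Rep_grassmann_times: "Rep_grassmann (a * b) = gmult (Rep_grassmann a) (Rep_grassmann b)"
  by (simp add: times_grassmann.rep_eq gmult_eq_gconv Rep_grassmann)

lemma Rep_grassmann_plus: "Rep_grassmann (a + b) = gadd (Rep_grassmann a) (Rep_grassmann b)"
  by (simp add: plus_grassmann.rep_eq gadd_def)

lemma Rep_grassmann_one: "Rep_grassmann 1 = gone"
  by (simp add: one_grassmann.rep_eq gone_def gscalar_def fun_eq_iff)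

lemma Rep_grassmann_zero: "Rep_grassmann 0 = gzero"
  by (simp add: zero_grassmann.rep_eq gzero_def)

lemma Rep_grassmann_sum: "Rep_grassmann (sum f A) S = (\<Sum>a\<in>A. Rep_grassmann (f a) S)"
  by (induction A rule: infinite_finite_induct)
    (auto simp: zero_grassmann.rep_eq plus_grassmann.rep_eq)

lift_definition grassmann_const :: "'k::field \<Rightarrow> 'k grassmann" is gscalar
  by (rule gscalar_in_grass)

lemma Rep_grassmann_const_times: "Rep_grassmann (grassmann_const r * x) S = r * Rep_grassmann x S"
  by transfer (simp add: gconv_gscalar_left)

lemma grassmann_const_add: "grassmann_const (a + b) = grassmann_const a + grassmann_const b"
  by transfer (auto simp: gscalar_def)

lemma grassmann_const_mult: "grassmann_const (a * b) = grassmann_const a * grassmann_const b"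
  by transfer (simp add: gconv_gscalar_left gscalar_in_grass, auto simp: gscalar_def)

lemma grassmann_const_one: "grassmann_const 1 = 1"
  by transfer simp

lift_definition grassmann_even :: "'k::field grassmann \<Rightarrow> bool" is even_supported .
lift_definition grassmann_odd :: "'k::field grassmann \<Rightarrow> bool" is odd_supported .

lemma grassmann_even_commute: "grassmann_even a \<Longrightarrow> a * b = b * a"
  by transfer (simp add: gconv_commute_even_supported)

lemma grassmann_odd_anticommute: "grassmann_odd a \<Longrightarrow> grassmann_odd b \<Longrightarrow> b * a = - (a * b)"
  by transfer (rule gconv_anticommute_odd_supported)

lemma grassmann_even_mult: "grassmann_even a \<Longrightarrow> grassmann_even b \<Longrightarrow> grassmann_even (a * b)"
  by transfer (rule even_supported_gconv)

lemma grassmann_even_add: "grassmann_even a \<Longrightarrow> grassmann_even b \<Longrightarrow> grassmann_even (a + b)"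
  by transfer (force simp: even_supported_def)

lemma grassmann_even_uminus: "grassmann_even a \<Longrightarrow> grassmann_even (- a)"
  by transfer (auto simp: even_supported_def)

lemma grassmann_even_const: "grassmann_even (grassmann_const r)"
  by transfer (auto simp: even_supported_def gscalar_def)

lemma grassmann_even_one: "grassmann_even 1"
  and grassmann_even_zero: "grassmann_even 0"
  by (transfer, auto simp: even_supported_def gscalar_def)+

lift_definition even_part :: "'k::field grassmann \<Rightarrow> 'k grassmann"
  is "\<lambda>x S. if even (card S) then x S else 0"
  by (auto simp: grass_def elim: finite_subset[rotated])

lift_definition odd_part :: "'k::field grassmann \<Rightarrow> 'k grassmann"
  is "\<lambda>x S. if odd (card S) then x S else 0"
  by (auto simp: grass_def elim: finite_subset[rotated])

lemma even_part_add_odd_part: "even_part x + odd_part x = x"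
  by transfer auto

lemma grassmann_even_even_part: "grassmann_even (even_part x)"
  by transfer (auto simp: even_supported_def)

lemma grassmann_odd_odd_part: "grassmann_odd (odd_part x)"
  by transfer (auto simp: odd_supported_def)

lemma grassmann_odd_mult_self:
  assumes "grassmann_odd (a :: 'k::field_char_0 grassmann)"
  shows "a * a = 0"
proof -
  have "a * a = - (a * a)" using grassmann_odd_anticommute[OF assms assms] .
  then have "Rep_grassmann (a * a) S = - Rep_grassmann (a * a) S" for S
    by (metis uminus_grassmann.rep_eq)
  then have "Rep_grassmann (a * a) S = 0" for S
    by (simp add: eq_neg_iff_add_eq_0 flip: mult_2)
  then show ?thesis
    by (metis Rep_grassmann_inject zero_grassmann.rep_eq ext)
qed

lemma grassmann_odd_commute_prod_list:
  assumes "grassmann_odd y" "\<forall>z\<in>set zs. grassmann_odd z"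
  shows "y * prod_list zs = prod_list zs * y \<or> y * prod_list zs = - (prod_list zs * y)"
  using assms(2)
proof (induction zs)
  case (Cons z zs)
  have "y * prod_list (z # zs) = - (z * (y * prod_list zs))"
    using grassmann_odd_anticommute[of y z] Cons.prems assms(1)
    by (simp flip: mult.assoc)
  with Cons show ?case by (auto simp: mult.assoc)
qed simp

lemma prod_list_odd_not_distinct:
  fixes y :: "nat \<Rightarrow> 'k::field_char_0 grassmann"
  assumes odd: "\<forall>j. grassmann_odd (y j)" and "\<not> distinct js"
  shows "prod_list (map y js) = 0"
proof -
  obtain xs a ys zs where js: "js = xs @ [a] @ ys @ [a] @ zs"
    using not_distinct_decomp[OF assms(2)] by blast
  let ?Y = "prod_list (map y ys)"
  have "?Y * y a * y a = 0"
    using grassmann_odd_mult_self[of "y a"] odd by (simp add: mult.assoc)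
  moreover have "y a * ?Y = ?Y * y a \<or> y a * ?Y = - (?Y * y a)"
    using grassmann_odd_commute_prod_list[of "y a" "map y ys"] odd by auto
  ultimately have "y a * ?Y * y a = 0" by auto
  then have "prod_list (map y xs) * (y a * ?Y * y a) * prod_list (map y zs) = 0" by simp
  then show ?thesis using js by (simp add: mult.assoc)
qed

definition commutator :: "'a::ring \<Rightarrow> 'a \<Rightarrow> 'a" where
  "commutator a b = a * b - b * a"

section \<open>Upper triangular matrices\<close>

datatype 'a ut = UT (ut11: 'a) (ut12: 'a) (ut22: 'a)

instantiation ut :: (ring_1) ring_1
begin
definition "0 = UT 0 0 0"
definition "1 = UT 1 0 1"
definition "x + y = UT (ut11 x + ut11 y) (ut12 x + ut12 y) (ut22 x + ut22 y)"
definition "- x = UT (- ut11 x) (- ut12 x) (- ut22 x)"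
definition "x - y = UT (ut11 x - ut11 y) (ut12 x - ut12 y) (ut22 x - ut22 y)"
definition "x * y = UT (ut11 x * ut11 y) (ut11 x * ut12 y + ut12 x * ut22 y) (ut22 x * ut22 y)"
instance
  by standard
    (simp_all add: zero_ut_def one_ut_def plus_ut_def uminus_ut_def minus_ut_def times_ut_def
      algebra_simps)
end

lemma ut_simps [simp]:
  "ut11 0 = 0" "ut12 0 = 0" "ut22 0 = 0" "ut11 1 = 1" "ut12 1 = 0" "ut22 1 = 1"
  "ut11 (x + y) = ut11 x + ut11 y" "ut12 (x + y) = ut12 x + ut12 y" "ut22 (x + y) = ut22 x + ut22 y"
  "ut11 (x - y) = ut11 x - ut11 y" "ut22 (x - y) = ut22 x - ut22 y"
  "ut11 (x * y) = ut11 x * ut11 y" "ut12 (x * y) = ut11 x * ut12 y + ut12 x * ut22 y"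
  "ut22 (x * y) = ut22 x * ut22 y"
  by (simp_all add: zero_ut_def one_ut_def plus_ut_def minus_ut_def times_ut_def)

lemma ut11_sum: "ut11 (sum f A) = (\<Sum>a\<in>A. ut11 (f a))"
  and ut12_sum: "ut12 (sum f A) = (\<Sum>a\<in>A. ut12 (f a))"
  and ut22_sum: "ut22 (sum f A) = (\<Sum>a\<in>A. ut22 (f a))"
  by (induction A rule: infinite_finite_induct) auto

lemma ut22_prod_list: "ut22 (prod_list xs) = prod_list (map ut22 xs)"
  by (induction xs) auto

lemma ut11_commutator: "ut11 (commutator x y) = commutator (ut11 x) (ut11 y)"
  and ut22_commutator: "ut22 (commutator x y) = commutator (ut22 x) (ut22 y)"
  by (simp_all add: commutator_def)

lemma ut_mult_eq_0:
  assumes "ut11 x = 0" "ut11 y = 0" "ut22 y = 0"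
  shows "x * y = 0"
  using assms by (simp add: times_ut_def zero_ut_def)

section \<open>Evaluating noncommutative polynomials\<close>

lemma polys_finite_support: "p \<in> polys \<Longrightarrow> finite {w. p w \<noteq> 0}"
  by (simp add: polys_def)

lemma pmult_support:
  "{w. pmult p q w \<noteq> 0} \<subseteq> (\<lambda>(u,v). u @ v) ` ({u. p u \<noteq> 0} \<times> {v. q v \<noteq> 0})"
proof
  fix w assume "w \<in> {w. pmult p q w \<noteq> 0}"
  then obtain i where "p (take i w) * q (drop i w) \<noteq> 0"
    unfolding pmult_def using sum.not_neutral_contains_not_neutral by force
  then show "w \<in> (\<lambda>(u,v). u @ v) ` ({u. p u \<noteq> 0} \<times> {v. q v \<noteq> 0})"
    by (intro image_eqI[of _ _ "(take i w, drop i w)"]) auto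
qed

lemma pmult_polys: "p \<in> polys \<Longrightarrow> q \<in> polys \<Longrightarrow> pmult p q \<in> polys"
  unfolding polys_def mem_Collect_eq by (rule finite_subset[OF pmult_support]) simp

lemma psub_polys: "p \<in> polys \<Longrightarrow> q \<in> polys \<Longrightarrow> psub p q \<in> polys"
  unfolding polys_def psub_def mem_Collect_eq
  by (rule finite_subset[of _ "{w. p w \<noteq> 0} \<union> {w. q w \<noteq> 0}"]) auto

lemma pcomm_polys: "p \<in> polys \<Longrightarrow> q \<in> polys \<Longrightarrow> pcomm p q \<in> polys"
  by (simp add: pcomm_def psub_polys pmult_polys)

lemma pone_polys: "pone \<in> polys"
  and pvar_polys: "pvar i \<in> polys"
  by (simp_all add: polys_def pone_def pvar_def)

lemma pprod_polys: "\<forall>p\<in>set ps. p \<in> polys \<Longrightarrow> pprod ps \<in> polys"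
  by (induction ps) (auto simp: pprod_def pone_polys pmult_polys)

lemma psubst_support:
  "{w. psubst f g w \<noteq> 0} \<subseteq> (\<Union>u\<in>{u. f u \<noteq> 0}. {w. pprod (map g u) w \<noteq> 0})"
proof
  fix w assume "w \<in> {w. psubst f g w \<noteq> 0}"
  then obtain u where "f u \<noteq> 0" "f u * pprod (map g u) w \<noteq> 0"
    unfolding psubst_def using sum.not_neutral_contains_not_neutral by blast
  then show "w \<in> (\<Union>u\<in>{u. f u \<noteq> 0}. {w. pprod (map g u) w \<noteq> 0})" by auto
qed

lemma psubst_polys: "f \<in> polys \<Longrightarrow> \<forall>i. g i \<in> polys \<Longrightarrow> psubst f g \<in> polys"
  unfolding polys_def mem_Collect_eq
  by (rule finite_subset[OF psubst_support])
    (auto intro!: polys_finite_support pprod_polys simp: polys_def)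

lemma commprod_polys: "commprod n \<in> polys"
  unfolding commprod_def by (auto intro!: pprod_polys pcomm_polys pvar_polys)

text \<open>Polynomials are evaluated in any ring into which \<open>K\<close> maps centrally;
  \<open>\<kappa>\<close> plays the role of the structure map of a \<open>K\<close>-algebra.\<close>

definition peval :: "('k::field \<Rightarrow> 'r::ring_1) \<Rightarrow> 'k ncpoly \<Rightarrow> (nat \<Rightarrow> 'r) \<Rightarrow> 'r" where
  "peval \<kappa> p \<phi> = (\<Sum>w\<in>{w. p w \<noteq> 0}. \<kappa> (p w) * prod_list (map \<phi> w))"

locale central_scalars =
  fixes \<kappa> :: "'k::field \<Rightarrow> 'r::ring_1"
  assumes scalar_add: "\<kappa> (a + b) = \<kappa> a + \<kappa> b"
    and scalar_mult: "\<kappa> (a * b) = \<kappa> a * \<kappa> b"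
    and scalar_one: "\<kappa> 1 = 1"
    and scalar_central: "\<kappa> a * x = x * \<kappa> a"
begin

lemma scalar_zero: "\<kappa> 0 = 0"
  using scalar_add[of 0 0] by simp

lemma scalar_diff: "\<kappa> (a - b) = \<kappa> a - \<kappa> b"
  using scalar_add[of "a - b" b] by (simp add: eq_diff_eq)

lemma scalar_sum: "\<kappa> (sum f A) = (\<Sum>a\<in>A. \<kappa> (f a))"
  by (induction A rule: infinite_finite_induct) (auto simp: scalar_zero scalar_add)

lemma peval_superset:
  assumes "finite W" "{w. p w \<noteq> 0} \<subseteq> W"
  shows "peval \<kappa> p \<phi> = (\<Sum>w\<in>W. \<kappa> (p w) * prod_list (map \<phi> w))"
  unfolding peval_def by (rule sum.mono_neutral_left) (use assms in \<open>auto simp: scalar_zero\<close>)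

lemma peval_pmult:
  assumes p: "p \<in> polys" and q: "q \<in> polys"
  shows "peval \<kappa> (pmult p q) \<phi> = peval \<kappa> p \<phi> * peval \<kappa> q \<phi>"
proof -
  let ?Sp = "{u. p u \<noteq> 0}" and ?Sq = "{v. q v \<noteq> 0}"
  let ?W = "(\<lambda>(u,v). u @ v) ` (?Sp \<times> ?Sq)"
  let ?m = "\<lambda>w. prod_list (map \<phi> w)"
  let ?h = "\<lambda>u v. \<kappa> (p u) * ?m u * (\<kappa> (q v) * ?m v)"
  have fin: "finite ?Sp" "finite ?Sq" "finite ?W" using p q by (auto simp: polys_def)
  have split: "\<kappa> (p (take i w)) * \<kappa> (q (drop i w)) * ?m w = ?h (take i w) (drop i w)" for i w
  proof -
    have "?m w = ?m (take i w) * ?m (drop i w)"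
      by (metis append_take_drop_id map_append prod_list.append)
    then show ?thesis by (simp add: mult.assoc scalar_central[of "q (drop i w)"])
  qed
  have "peval \<kappa> (pmult p q) \<phi> = (\<Sum>w\<in>?W. \<kappa> (pmult p q w) * ?m w)"
    by (rule peval_superset[OF fin(3) pmult_support])
  also have "\<dots> = (\<Sum>w\<in>?W. \<Sum>i\<le>length w. ?h (take i w) (drop i w))"
    by (simp add: pmult_def scalar_sum scalar_mult sum_distrib_right split)
  also have "\<dots> = (\<Sum>(w,i)\<in>Sigma ?W (\<lambda>w. {..length w}). ?h (take i w) (drop i w))"
    by (rule sum.Sigma) (auto simp: fin)
  also have "\<dots> = (\<Sum>(w,i)\<in>{(w,i)\<in>Sigma ?W (\<lambda>w. {..length w}).
                      p (take i w) \<noteq> 0 \<and> q (drop i w) \<noteq> 0}. ?h (take i w) (drop i w))"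
    by (rule sum.mono_neutral_right) (auto simp: fin scalar_zero)
  also have "\<dots> = (\<Sum>(u,v)\<in>?Sp \<times> ?Sq. ?h u v)"
    by (rule sum.reindex_bij_witness[where i="\<lambda>(u,v). (u @ v, length u)"
          and j="\<lambda>(w,i). (take i w, drop i w)"])
      (auto simp: min_def simp del: take_append drop_append, simp_all)
  also have "\<dots> = peval \<kappa> p \<phi> * peval \<kappa> q \<phi>"
    by (simp add: peval_def sum_product sum.cartesian_product)
  finally show ?thesis .
qed

lemma peval_psub:
  assumes p: "p \<in> polys" and q: "q \<in> polys"
  shows "peval \<kappa> (psub p q) \<phi> = peval \<kappa> p \<phi> - peval \<kappa> q \<phi>"
proof -
  let ?W = "{w. p w \<noteq> 0} \<union> {w. q w \<noteq> 0}"
  have fin: "finite ?W" using p q by (auto simp: polys_def)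
  have "peval \<kappa> (psub p q) \<phi> = (\<Sum>w\<in>?W. \<kappa> (psub p q w) * prod_list (map \<phi> w))"
    by (rule peval_superset[OF fin]) (auto simp: psub_def)
  moreover have "peval \<kappa> p \<phi> = (\<Sum>w\<in>?W. \<kappa> (p w) * prod_list (map \<phi> w))"
    and "peval \<kappa> q \<phi> = (\<Sum>w\<in>?W. \<kappa> (q w) * prod_list (map \<phi> w))"
    by (rule peval_superset[OF fin], auto)+
  ultimately show ?thesis
    by (simp add: psub_def scalar_diff left_diff_distrib sum_subtractf)
qed

lemma peval_pcomm:
  "p \<in> polys \<Longrightarrow> q \<in> polys \<Longrightarrow>
   peval \<kappa> (pcomm p q) \<phi> = commutator (peval \<kappa> p \<phi>) (peval \<kappa> q \<phi>)"
  by (simp add: pcomm_def commutator_def peval_psub pmult_polys peval_pmult)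

lemma peval_pone: "peval \<kappa> pone \<phi> = 1"
proof -
  have "{w. pone w \<noteq> (0::'k)} = {[]}" by (auto simp: pone_def)
  then show ?thesis by (simp add: peval_def pone_def scalar_one)
qed

lemma peval_pvar: "peval \<kappa> (pvar i) \<phi> = \<phi> i"
proof -
  have "{w. pvar i w \<noteq> (0::'k)} = {[i]}" by (auto simp: pvar_def)
  then show ?thesis by (simp add: peval_def pvar_def scalar_one)
qed

lemma peval_pprod:
  "\<forall>p\<in>set ps. p \<in> polys \<Longrightarrow> peval \<kappa> (pprod ps) \<phi> = prod_list (map (\<lambda>p. peval \<kappa> p \<phi>) ps)"
  by (induction ps) (simp_all add: pprod_def peval_pone peval_pmult pprod_polys[unfolded pprod_def])

lemma peval_psubst:
  assumes f: "f \<in> polys" and g: "\<forall>i. g i \<in> polys"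
  shows "peval \<kappa> (psubst f g) \<phi> = peval \<kappa> f (\<lambda>i. peval \<kappa> (g i) \<phi>)"
proof -
  let ?Sf = "{u. f u \<noteq> 0}"
  let ?Q = "\<lambda>u. pprod (map g u)"
  let ?W = "\<Union>u\<in>?Sf. {w. ?Q u w \<noteq> 0}"
  let ?m = "\<lambda>w. prod_list (map \<phi> w)"
  have fin: "finite ?W" using f g by (auto simp: polys_def intro!: polys_finite_support pprod_polys)
  have "peval \<kappa> (psubst f g) \<phi> = (\<Sum>w\<in>?W. \<kappa> (psubst f g w) * ?m w)"
    by (rule peval_superset[OF fin psubst_support])
  also have "\<dots> = (\<Sum>w\<in>?W. \<Sum>u\<in>?Sf. \<kappa> (f u) * (\<kappa> (?Q u w) * ?m w))"
    by (simp add: psubst_def scalar_sum scalar_mult sum_distrib_right mult.assoc)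
  also have "\<dots> = (\<Sum>u\<in>?Sf. \<kappa> (f u) * (\<Sum>w\<in>?W. \<kappa> (?Q u w) * ?m w))"
    by (simp add: sum.swap[of _ ?W] sum_distrib_left)
  also have "\<dots> = (\<Sum>u\<in>?Sf. \<kappa> (f u) * peval \<kappa> (?Q u) \<phi>)"
    by (intro sum.cong refl arg_cong2[where f="(*)"] peval_superset[OF fin, symmetric]) auto
  also have "\<dots> = peval \<kappa> f (\<lambda>i. peval \<kappa> (g i) \<phi>)"
    using g by (simp add: peval_def[of \<kappa> f] peval_pprod comp_def)
  finally show ?thesis .
qed

lemma peval_commprod:
  "peval \<kappa> (commprod n) \<phi> =
   prod_list (map (\<lambda>j. commutator (\<phi> (2*j+1)) (\<phi> (2*j+2))) [0..<(n+4) div 2])"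
  unfolding commprod_def
  by (subst peval_pprod) (auto simp: pcomm_polys pvar_polys peval_pcomm peval_pvar comp_def)

end

lemma peval_hom:
  assumes "\<And>x y. h (x + y) = h x + h y" "\<And>x y. h (x * y) = h x * h y" "h 1 = 1" "h 0 = 0"
    and "\<And>a. h (\<kappa>\<^sub>1 a) = \<kappa>\<^sub>2 a"
  shows "h (peval \<kappa>\<^sub>1 p \<phi>) = peval \<kappa>\<^sub>2 p (\<lambda>i. h (\<phi> i))"
proof -
  have h_sum: "h (sum f A) = (\<Sum>a\<in>A. h (f a))" for f :: "_ \<Rightarrow> 'a" and A
    by (induction A rule: infinite_finite_induct) (auto simp: assms)
  have h_prod_list: "h (prod_list xs) = prod_list (map h xs)" for xs
    by (induction xs) (auto simp: assms)
  show ?thesis unfolding peval_def h_sum by (simp add: assms h_prod_list comp_def)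
qed

lemma central_scalars_ut:
  assumes "central_scalars \<kappa>"
  shows "central_scalars (\<lambda>r. UT (\<kappa> r) 0 (\<kappa> r))"
proof -
  interpret central_scalars \<kappa> by fact
  show ?thesis
  proof
    fix a b and x :: "'b ut"
    show "UT (\<kappa> (a + b)) 0 (\<kappa> (a + b)) = UT (\<kappa> a) 0 (\<kappa> a) + UT (\<kappa> b) 0 (\<kappa> b)"
      by (simp add: plus_ut_def scalar_add)
    show "UT (\<kappa> (a * b)) 0 (\<kappa> (a * b)) = UT (\<kappa> a) 0 (\<kappa> a) * UT (\<kappa> b) 0 (\<kappa> b)"
      by (simp add: times_ut_def scalar_mult)
    show "UT (\<kappa> 1) 0 (\<kappa> 1) = 1"
      by (simp add: one_ut_def scalar_one)
    show "UT (\<kappa> a) 0 (\<kappa> a) * x = x * UT (\<kappa> a) 0 (\<kappa> a)"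
      by (simp add: times_ut_def scalar_central)
  qed
qed

section \<open>Products of commutators in the Grassmann algebra\<close>

interpretation grassmann_const: central_scalars "grassmann_const :: 'k::field \<Rightarrow> 'k grassmann"
  by standard (rule grassmann_const_add grassmann_const_mult grassmann_const_one
      grassmann_even_commute[OF grassmann_even_const])+

lemma grassmann_even_peval:
  assumes "\<forall>j. grassmann_even (z j)"
  shows "grassmann_even (peval grassmann_const G z)"
proof -
  have "grassmann_even (prod_list (map z w))" for w
    by (induction w) (auto intro: grassmann_even_mult grassmann_even_one assms[rule_format])
  then show ?thesis
    unfolding peval_def
    by (induction rule: infinite_finite_induct)
      (auto intro: grassmann_even_add grassmann_even_zero grassmann_even_mult grassmann_even_const)
qed

inductive_set odd_span :: "(nat \<Rightarrow> 'k::field grassmann) \<Rightarrow> nat \<Rightarrow> nat \<Rightarrow> 'k grassmann set"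
  for y N d where
  zero: "0 \<in> odd_span y N d"
| monomial: "grassmann_even c \<Longrightarrow> d \<le> length js \<Longrightarrow> set js \<subseteq> {1..N} \<Longrightarrow>
    c * prod_list (map y js) \<in> odd_span y N d"
| add: "u \<in> odd_span y N d \<Longrightarrow> v \<in> odd_span y N d \<Longrightarrow> u + v \<in> odd_span y N d"

lemma odd_span_even: "grassmann_even c \<Longrightarrow> c \<in> odd_span y N 0"
  using odd_span.monomial[of c 0 "[]"] by simp

lemma odd_span_uminus: "u \<in> odd_span y N d \<Longrightarrow> - u \<in> odd_span y N d"
proof (induction rule: odd_span.induct)
  case (monomial c js)
  then have "(- c) * prod_list (map y js) \<in> odd_span y N d"
    by (intro odd_span.monomial grassmann_even_uminus)
  then show ?case by simp
next
  case (add u v)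
  then show ?case by (metis minus_add_distrib odd_span.add)
qed (auto intro: odd_span.intros)

lemma odd_span_diff: "u \<in> odd_span y N d \<Longrightarrow> v \<in> odd_span y N d \<Longrightarrow> u - v \<in> odd_span y N d"
  unfolding diff_conv_add_uminus by (rule odd_span.add[OF _ odd_span_uminus])

lemma odd_span_sum: "(\<And>a. a \<in> A \<Longrightarrow> f a \<in> odd_span y N d) \<Longrightarrow> sum f A \<in> odd_span y N d"
  by (induction A rule: infinite_finite_induct) (auto intro: odd_span.intros)

lemma odd_span_mult:
  assumes "u \<in> odd_span y N d" "v \<in> odd_span y N e"
  shows "u * v \<in> odd_span y N (d + e)"
  using assms(1)
proof (induction rule: odd_span.induct)
  case (monomial c js)
  note outer = monomial.hyps
  show ?case using assms(2)
  proof (induction rule: odd_span.induct)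
    case (monomial c' js')
    have "c * prod_list (map y js) * (c' * prod_list (map y js')) =
        (c * c') * prod_list (map y (js @ js'))"
      using grassmann_even_commute[OF monomial(1), of "prod_list (map y js)"]
      by (simp add: mult.assoc) (metis mult.assoc)
    moreover have "(c * c') * prod_list (map y (js @ js')) \<in> odd_span y N (d + e)"
      using outer monomial.hyps by (intro odd_span.monomial grassmann_even_mult) auto
    ultimately show ?case by simp
  qed (auto simp: distrib_left intro: odd_span.intros)
qed (auto simp: distrib_right intro: odd_span.intros)

lemma odd_span_prod_list:
  "\<forall>u\<in>set us. u \<in> odd_span y N 2 \<Longrightarrow> prod_list us \<in> odd_span y N (2 * length us)"
  by (induction us) (auto intro: odd_span_even grassmann_even_one dest: odd_span_mult)

text \<open>By pigeonhole, a monomial of degree above \<open>N\<close> repeats a factor.\<close>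

lemma odd_span_eq_0:
  fixes y :: "nat \<Rightarrow> 'k::field_char_0 grassmann"
  assumes "\<forall>j. grassmann_odd (y j)" "N < d" "u \<in> odd_span y N d"
  shows "u = 0"
  using assms(3)
proof (induction rule: odd_span.induct)
  case (monomial c js)
  have "\<not> distinct js"
  proof
    assume "distinct js"
    then have "length js \<le> card {1..N}"
      using monomial(3) by (metis distinct_card card_mono finite_atLeastAtMost)
    then show False using monomial(2) assms(2) by simp
  qed
  then show ?case using prod_list_odd_not_distinct[OF assms(1)] by simp
qed auto

lemma odd_span_0_decompose:
  assumes "u \<in> odd_span y N 0"
  obtains e v where "grassmann_even e" "v \<in> odd_span y N 1" "u = e + v"
proof -
  from assms have "\<exists>e v. grassmann_even e \<and> v \<in> odd_span y N 1 \<and> u = e + v"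
  proof (induction rule: odd_span.induct)
    case zero
    show ?case using grassmann_even_zero odd_span.zero by force
  next
    case (monomial c js)
    show ?case
    proof (cases js)
      case Nil
      then show ?thesis using monomial(1) odd_span.zero by force
    next
      case Cons
      then have "c * prod_list (map y js) \<in> odd_span y N 1"
        using monomial by (intro odd_span.monomial) auto
      then show ?thesis using grassmann_even_zero by force
    qed
  next
    case (add u v)
    then show ?case by (metis add.assoc add.left_commute grassmann_even_add odd_span.add)
  qed
  then show ?thesis using that by blast
qed

text \<open>Even parts are central, so only the parts of degree at least one contribute to a commutator.\<close>

lemma odd_span_commutator:
  assumes "u \<in> odd_span y N 0" "v \<in> odd_span y N 0"
  shows "commutator u v \<in> odd_span y N 2"
proof -
  obtain e u' where e: "grassmann_even e" and u': "u' \<in> odd_span y N 1" and u: "u = e + u'"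
    using odd_span_0_decompose[OF assms(1)] .
  obtain f v' where f: "grassmann_even f" and v': "v' \<in> odd_span y N 1" and v: "v = f + v'"
    using odd_span_0_decompose[OF assms(2)] .
  have "commutator e f = 0" "commutator e v' = 0" "commutator u' f = 0"
    using grassmann_even_commute[OF e, of f] grassmann_even_commute[OF e, of v']
      grassmann_even_commute[OF f, of u'] by (simp_all add: commutator_def)
  moreover have "commutator u v =
      commutator e f + commutator e v' + commutator u' f + commutator u' v'"
    by (simp add: commutator_def u v algebra_simps)
  ultimately have "commutator u v = u' * v' - v' * u'" by (simp add: commutator_def)
  then show ?thesis
    using odd_span_diff[OF odd_span_mult[OF u' v'] odd_span_mult[OF v' u']]
    unfolding one_add_one by simp
qed

lemma peval_in_odd_span:
  assumes "G \<in> polys_in N" "\<forall>j\<in>{1..N}. z j \<in> odd_span y N 0"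
  shows "peval grassmann_const G z \<in> odd_span y N 0"
proof -
  have "prod_list (map z w) \<in> odd_span y N 0" if "set w \<subseteq> {1..N}" for w
    using that
  proof (induction w)
    case (Cons j w)
    then show ?case using odd_span_mult[of "z j" y N 0] assms(2) by simp
  qed (simp add: odd_span_even grassmann_even_one)
  then have "prod_list (map z w) \<in> odd_span y N 0" if "G w \<noteq> 0" for w
    using assms(1) that by (simp add: polys_in_def)
  moreover have "grassmann_const r * v \<in> odd_span y N 0" if "v \<in> odd_span y N 0" for r v
    using odd_span_mult[OF odd_span_even[OF grassmann_even_const] that] by simp
  ultimately show ?thesis
    unfolding peval_def by (intro odd_span_sum) simp
qed

lemma odd_span_odd_parts:
  assumes "j \<in> {1..N}"
  shows "z j \<in> odd_span (\<lambda>i. odd_part (z i)) N 0"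
proof -
  let ?y = "\<lambda>i. odd_part (z i)"
  have "1 * prod_list (map ?y [j]) \<in> odd_span ?y N 0"
    using assms by (intro odd_span.monomial grassmann_even_one) auto
  then have "odd_part (z j) \<in> odd_span ?y N 0" by simp
  then have "even_part (z j) + odd_part (z j) \<in> odd_span ?y N 0"
    by (rule odd_span.add[OF odd_span_even[OF grassmann_even_even_part]])
  then show ?thesis by (simp only: even_part_add_odd_part)
qed

theorem prod_commutators_eq_0:
  fixes z :: "nat \<Rightarrow> 'k::field_char_0 grassmann"
  assumes "set GHs \<subseteq> polys_in N \<times> polys_in N" "N < 2 * length GHs"
  shows "prod_list (map (\<lambda>(G, H). commutator (peval grassmann_const G z) (peval grassmann_const H z))
    GHs) = 0"
proof -
  let ?y = "\<lambda>i. odd_part (z i)"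
  let ?cs = "map (\<lambda>(G, H). commutator (peval grassmann_const G z) (peval grassmann_const H z)) GHs"
  have "peval grassmann_const G z \<in> odd_span ?y N 0" if "G \<in> polys_in N" for G
    using that by (intro peval_in_odd_span ballI odd_span_odd_parts)
  with assms(1) have "\<forall>c\<in>set ?cs. c \<in> odd_span ?y N 2"
    by (auto intro: odd_span_commutator)
  then have "prod_list ?cs \<in> odd_span ?y N (2 * length GHs)"
    using odd_span_prod_list by fastforce
  then show ?thesis
    using assms(2) grassmann_odd_odd_part by (intro odd_span_eq_0) auto
qed

definition ut_of_tri :: "'k::field tri \<Rightarrow> 'k grassmann ut" where
  "ut_of_tri X = (case X of (a, b, c) \<Rightarrow> UT (Abs_grassmann a) (Abs_grassmann b) (Abs_grassmann c))"

definition tri_of_ut :: "'k::field grassmann ut \<Rightarrow> 'k tri" where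
  "tri_of_ut X = (Rep_grassmann (ut11 X), Rep_grassmann (ut12 X), Rep_grassmann (ut22 X))"

definition ut_const :: "'k::field \<Rightarrow> 'k grassmann ut" where
  "ut_const r = UT (grassmann_const r) 0 (grassmann_const r)"

interpretation ut_const: central_scalars "ut_const :: 'k::field \<Rightarrow> 'k grassmann ut"
  unfolding ut_const_def by (rule central_scalars_ut[OF grassmann_const.central_scalars_axioms])

lemma tri_carrierE:
  assumes "X \<in> tri_carrier"
  obtains a b c where "X = (a, b, c)" "a \<in> grass" "even_supported a" "b \<in> grass" "c \<in> grass"
  using assms by (auto simp: tri_carrier_def grass_even_def even_supported_def)

lemma tprod_eq_tri_of_ut:
  assumes "\<forall>i. \<phi> i \<in> tri_carrier"
  shows "tprod (map \<phi> w) = tri_of_ut (prod_list (map (\<lambda>i. ut_of_tri (\<phi> i)) w))"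
proof (induction w)
  case Nil
  show ?case by (simp add: tprod_def tone_def tri_of_ut_def Rep_grassmann_one Rep_grassmann_zero)
next
  case (Cons i w)
  obtain a b c where "\<phi> i = (a, b, c)" "a \<in> grass" "b \<in> grass" "c \<in> grass"
    using assms by (meson tri_carrierE)
  with Cons show ?case
    by (simp add: tprod_def tmult_def tri_of_ut_def ut_of_tri_def Rep_grassmann_times
        Rep_grassmann_plus Abs_grassmann_inverse)
qed

lemma teval_eq_tri_of_ut:
  assumes "\<forall>i. \<phi> i \<in> tri_carrier"
  shows "teval p \<phi> = tri_of_ut (peval ut_const p (\<lambda>i. ut_of_tri (\<phi> i)))"
  by (simp add: teval_def tri_of_ut_def peval_def ut11_sum ut12_sum ut22_sum Rep_grassmann_sum
      ut_const_def times_ut_def Rep_grassmann_const_times tprod_eq_tri_of_ut[OF assms] fun_eq_iff)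

lemma ut11_peval_ut_const:
  "ut11 (peval ut_const G \<Phi>) = peval grassmann_const G (\<lambda>k. ut11 (\<Phi> k))"
  and ut22_peval_ut_const:
  "ut22 (peval ut_const G \<Phi>) = peval grassmann_const G (\<lambda>k. ut22 (\<Phi> k))"
  by (rule peval_hom; simp add: ut_const_def)+

lemma grassmann_even_ut11_of_tri: "X \<in> tri_carrier \<Longrightarrow> grassmann_even (ut11 (ut_of_tri X))"
  by (auto simp: ut_of_tri_def grassmann_even.rep_eq Abs_grassmann_inverse elim!: tri_carrierE)

lemma ut11_commutator_eq_0:
  assumes "\<forall>k. grassmann_even (ut11 (\<Phi> k))"
  shows "ut11 (commutator (peval ut_const G \<Phi>) (peval ut_const H \<Phi>)) = 0"
  by (simp add: ut11_commutator ut11_peval_ut_const commutator_def grassmann_even_commute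
      grassmann_even_peval assms)

lemma ut22_prod_commutators_eq_0:
  fixes \<Phi> :: "nat \<Rightarrow> 'k::field_char_0 grassmann ut"
  assumes "set GHs \<subseteq> polys_in N \<times> polys_in N" "N < 2 * length GHs"
  shows "ut22 (prod_list (map (\<lambda>(G, H). commutator (peval ut_const G \<Phi>) (peval ut_const H \<Phi>))
    GHs)) = 0"
  using prod_commutators_eq_0[OF assms, of "\<lambda>k. ut22 (\<Phi> k)"]
  by (simp add: ut22_prod_list ut22_commutator ut22_peval_ut_const comp_def prod.case_distrib)

lemma is_PI_of_F_commprod:
  assumes "even n" "N \<le> Suc n"
  shows "is_PI_of_F N (commprod n :: 'k::field_char_0 ncpoly)"
  unfolding is_PI_of_F_def T_A_def
proof (intro allI impI CollectI conjI)
  fix g :: "nat \<Rightarrow> 'k ncpoly"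
  assume g: "\<forall>i. g i \<in> polys_in N"
  then have g_polys: "\<forall>i. g i \<in> polys" by (simp add: polys_in_def)
  show "psubst (commprod n) g \<in> polys"
    by (rule psubst_polys[OF commprod_polys g_polys])
  fix \<phi> :: "nat \<Rightarrow> 'k tri"
  assume \<phi>: "\<forall>i. \<phi> i \<in> tri_carrier"
  define \<Phi> where "\<Phi> = (\<lambda>i. ut_of_tri (\<phi> i))"
  define C where "C = (\<lambda>(G, H). commutator (peval ut_const G \<Phi>) (peval ut_const H \<Phi>))"
  define GHs where "GHs = map (\<lambda>j. (g (2*j+1), g (2*j+2))) [1..<(n+4) div 2]"
  have "[0..<(n+4) div 2] = 0 # [1..<(n+4) div 2]" by (simp add: upt_conv_Cons)
  then have "peval ut_const (psubst (commprod n) g) \<Phi> = C (g 1, g 2) * prod_list (map C GHs)"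
    by (simp add: ut_const.peval_psubst[OF commprod_polys g_polys] ut_const.peval_commprod
        C_def GHs_def comp_def numeral_2_eq_2)
  moreover have "ut11 (C (g 1, g 2)) = 0"
    using \<phi> by (simp add: C_def \<Phi>_def ut11_commutator_eq_0 grassmann_even_ut11_of_tri)
  moreover have "ut22 (prod_list (map C GHs)) = 0"
    using assms g unfolding C_def
    by (intro ut22_prod_commutators_eq_0) (auto simp: GHs_def elim!: evenE)
  ultimately show "teval (psubst (commprod n) g) \<phi> = tzero"
    by (simp add: teval_eq_tri_of_ut[OF \<phi>] \<Phi>_def[symmetric] ut_mult_eq_0 tri_of_ut_def
        tzero_def Rep_grassmann_zero)
qed

theorem proposition3p3:
  fixes n :: nat
  assumes "n \<ge> 2" and "even n"
  shows "is_PI_of_F n (commprod n :: 'k::field_char_0 ncpoly)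
       \<and> is_PI_of_F (Suc n) (commprod n :: 'k::field_char_0 ncpoly)"
  by (simp add: is_PI_of_F_commprod assms(2))

end
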